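(* Let $(M,g)$ be a $d$-dimensional Lorentzian manifold with $d\ge 4$, $p\in M$, and $\{\ell,n,m^3,\dots,m^d\}$ a null frame at $p$. Suppose the Weyl tensor $C$ at $p$ is invariant under the subgroup of the Lorentz group that fixes $\ell$ and $n$ and acts as $SO(d-2)$, in its standard representation, on $\mathrm{span}\{m^3,\dots,m^d\}$. Consider the Weyl operator $\mathsf C$ on bivectors at $p$, $(\mathsf C F)^{\mu\nu}=\tfrac12 C^{\mu\nu}{}_{\alpha\beta}F^{\alpha\beta}$. Then the eigenvalues of $\mathsf C$ (with multiplicities) are: (i) if $d=4$: $-\tfrac14(\bar R+2iA_{34})$ and $-\tfrac14(\bar R-2iA_{34})$, each with multiplicity $2$, and $\tfrac12(\bar R+2iA_{34})$, $\tfrac12(\bar R-2iA_{34})$, each with multiplicity $1$; (ii) if $d>4$: $-\frac{1}{2(d-2)}\bar R$ with multiplicity $2(d-2)$, $\tfrac12\bar R$ with multiplicity $1$, and $\frac{1}{(d-2)(d-3)}\bar R$ with multiplicity $\tfrac{(d-2)(d-3)}{2}$.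
   Context: Null frame convention: $g=2\,\ell\, n+\delta_{ij}m^im^j$, i.e. $g(\ell,n)=1$, $g(m^i,m^j)=\delta_{ij}$, all other products zero. Frame indices: $0$ refers to $\ell$, $1$ to $n$, $i,j,k\in\{3,\dots,d\}$ to the $m^i$. $C_{abcd}$ are the frame components of the Weyl tensor. Define $\bar R_{ij}=\sum_k C_{kikj}$, $\bar R=\sum_i\bar R_{ii}$, and $A_{34}=C_{0134}$ (the frame component with indices $\ell,n,m^3,m^4$). *)

theory Defs
  imports "Jordan_Normal_Form.Char_Poly"
begin

text \<open>Frame indices are 0..d-1: 0 is l, 1 is n, and index k (2 <= k < d)
  is the spacelike frame vector m^(k+1) of the paper.
  Frame metric (equal to its inverse): g(l,n)=1, g(m^i,m^j)=delta.\<close>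

definition frame_eta :: "nat \<Rightarrow> nat \<Rightarrow> nat \<Rightarrow> real" where
  "frame_eta d a b =
     (if (a = 0 \<and> b = 1) \<or> (a = 1 \<and> b = 0) then 1
      else if a = b \<and> 2 \<le> a \<and> a < d then 1 else 0)"

definition is_weyl :: "nat \<Rightarrow> (nat \<Rightarrow> nat \<Rightarrow> nat \<Rightarrow> nat \<Rightarrow> real) \<Rightarrow> bool" where
  "is_weyl d C \<longleftrightarrow>
     (\<forall>a<d. \<forall>b<d. \<forall>c<d. \<forall>e<d.
        C a b c e = - C b a c e \<and>
        C a b c e = - C a b e c \<and>
        C a b c e = C c e a b \<and>
        C a b c e + C a c e b + C a e b c = 0) \<and>
     (\<forall>b<d. \<forall>e<d. (\<Sum>a<d. \<Sum>c<d. frame_eta d a c * C a b c e) = 0)"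

text \<open>Lorentz transformation fixing l and n and acting by R on span of the m's:
  new frame vector a is the sum over a' of (lorentz_of d R a' a) times old frame vector a'.\<close>
definition lorentz_of :: "nat \<Rightarrow> real mat \<Rightarrow> nat \<Rightarrow> nat \<Rightarrow> real" where
  "lorentz_of d R a b =
     (if a < 2 \<or> b < 2 then (if a = b then 1 else 0) else R $$ (a - 2, b - 2))"

definition so_invariant :: "nat \<Rightarrow> (nat \<Rightarrow> nat \<Rightarrow> nat \<Rightarrow> nat \<Rightarrow> real) \<Rightarrow> bool" where
  "so_invariant d C \<longleftrightarrow>
     (\<forall>R \<in> carrier_mat (d - 2) (d - 2).
        transpose_mat R * R = 1\<^sub>m (d - 2) \<and> det R = 1 \<longrightarrow>
        (\<forall>a<d. \<forall>b<d. \<forall>c<d. \<forall>e<d.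
          (\<Sum>a'<d. \<Sum>b'<d. \<Sum>c'<d. \<Sum>e'<d.
             lorentz_of d R a' a * lorentz_of d R b' b * lorentz_of d R c' c *
             lorentz_of d R e' e * C a' b' c' e') = C a b c e))"

text \<open>Raising an index with the frame metric swaps l and n.\<close>
definition swap01 :: "nat \<Rightarrow> nat" where
  "swap01 x = (if x = 0 then 1 else if x = 1 then 0 else x)"

text \<open>Basis of bivectors: e_a wedge e_b for a < b < d.\<close>
definition bivector_pairs :: "nat \<Rightarrow> (nat \<times> nat) list" where
  "bivector_pairs d = [(a, b). b \<leftarrow> [0..<d], a \<leftarrow> [0..<b]]"

text \<open>Matrix of the Weyl operator (C F)^{mu nu} = 1/2 C^{mu nu}_{alpha beta} F^{alpha beta}
  in the basis of bivectors; entry ((mu,nu),(a,b)) is C^{mu nu}_{a b}.\<close>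
definition weyl_op_mat :: "nat \<Rightarrow> (nat \<Rightarrow> nat \<Rightarrow> nat \<Rightarrow> nat \<Rightarrow> real) \<Rightarrow> complex mat" where
  "weyl_op_mat d C =
     (let P = bivector_pairs d; N = length P in
      mat N N (\<lambda>(i, j). case P ! i of (mu, nu) \<Rightarrow> case P ! j of (a, b) \<Rightarrow>
         complex_of_real (C (swap01 mu) (swap01 nu) a b)))"

definition Rbar :: "nat \<Rightarrow> (nat \<Rightarrow> nat \<Rightarrow> nat \<Rightarrow> nat \<Rightarrow> real) \<Rightarrow> real" where
  "Rbar d C = (\<Sum>i\<in>{2..<d}. \<Sum>k\<in>{2..<d}. C k i k i)"

definition A34 :: "(nat \<Rightarrow> nat \<Rightarrow> nat \<Rightarrow> nat \<Rightarrow> real) \<Rightarrow> real" where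
  "A34 C = C 0 1 2 3"

end

theory Submission
  imports Defs
begin

text \<open>Invariance under the signed permutation matrices in \<open>SO(d - 2)\<close> already pins down \<open>C\<close>.
  Reversing two spatial axes kills every component with an odd number of indices along them, and
  exchanging two axes (reversing one of them) makes the surviving components independent of which
  axes occur. With the symmetries, the Bianchi identity and tracelessness, all that is left are
  \<open>u = C(\<ell>, m\<^sup>i, n, m\<^sup>i)\<close> (\<open>mixed_coeff\<close>), \<open>w = C(m\<^sup>i, m\<^sup>j, m\<^sup>i, m\<^sup>j)\<close>
  (\<open>spatial_coeff\<close>) and, for \<open>d = 4\<close>, \<open>A\<^sub>3\<^sub>4\<close>; moreover \<open>2 u + (d - 3) w = 0\<close> and
  \<open>R = (d - 2) (d - 3) w\<close>. For \<open>d > 4\<close> the Weyl operator is therefore diagonal on the bivectors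
  \<open>e\<^sub>a \<and> e\<^sub>b\<close>, with \<open>R / 2\<close> on \<open>\<ell> \<and> n\<close>, \<open>u\<close> on the \<open>2 (d - 2)\<close> bivectors \<open>\<ell> \<and> m\<close>,
  \<open>n \<and> m\<close> and \<open>w\<close> on the bivectors \<open>m \<and> m\<close>. For \<open>d = 4\<close>, \<open>A\<^sub>3\<^sub>4\<close> couples \<open>\<ell> \<and> n\<close> with
  \<open>m\<^sup>3 \<and> m\<^sup>4\<close> and \<open>\<ell> \<and> m\<^sup>i\<close> with \<open>n \<and> m\<^sup>j\<close>, splitting the operator into three
  \<open>2 \<times> 2\<close> blocks \<open>[[a, -b], [b, a]]\<close>.\<close>

lemma sum_lessThan_single:
  fixes L X :: "nat \<Rightarrow> real"
  assumes "\<And>x. x < d \<Longrightarrow> L x = (if x = t then s else 0)" and "t < d"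
  shows "(\<Sum>x<d. L x * X x) = s * X t"
proof -
  have "(\<Sum>x<d. L x * X x) = (\<Sum>x<d. if x = t then s * X t else 0)"
    by (rule sum.cong) (auto simp: assms)
  also have "\<dots> = s * X t"
    using assms(2) by simp
  finally show ?thesis .
qed

lemma signed_permutation_mat_orthogonal:
  fixes R :: "real mat"
  assumes R: "R \<in> carrier_mat n n"
    and entries: "\<And>r c. r < n \<Longrightarrow> c < n \<Longrightarrow> R $$ (r, c) = (if r = \<pi> c then t c else 0)"
    and \<pi>: "\<And>c. c < n \<Longrightarrow> \<pi> c < n" "\<And>c c'. c < n \<Longrightarrow> c' < n \<Longrightarrow> \<pi> c = \<pi> c' \<Longrightarrow> c = c'"
    and t: "\<And>c. c < n \<Longrightarrow> t c * t c = 1"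
  shows "transpose_mat R * R = 1\<^sub>m n"
proof (rule eq_matI)
  fix i j assume "i < dim_row (1\<^sub>m n)" "j < dim_col (1\<^sub>m n)"
  then have i: "i < n" and j: "j < n" by auto
  have "(transpose_mat R * R) $$ (i, j) = (\<Sum>k<n. R $$ (k, i) * R $$ (k, j))"
    using R i j by (simp add: scalar_prod_def atLeast0LessThan)
  also have "\<dots> = t i * R $$ (\<pi> i, j)"
    by (rule sum_lessThan_single) (auto simp: entries i \<pi>)
  also have "\<dots> = 1\<^sub>m n $$ (i, j)"
    using i j t[OF i] by (auto simp: entries \<pi>(1) dest: \<pi>(2))
  finally show "(transpose_mat R * R) $$ (i, j) = 1\<^sub>m n $$ (i, j)" .
qed (use R in auto)

lemma so_invariant_signed_permutation:
  assumes inv: "so_invariant d C" and R: "R \<in> carrier_mat (d - 2) (d - 2)"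
    and orth: "transpose_mat R * R = 1\<^sub>m (d - 2)" and det: "det R = 1"
    and L: "\<And>a a'. a < d \<Longrightarrow> a' < d \<Longrightarrow> lorentz_of d R a' a = (if a' = \<sigma> a then s a else 0)"
    and \<sigma>: "\<And>a. a < d \<Longrightarrow> \<sigma> a < d"
    and abce: "a < d" "b < d" "c < d" "e < d"
  shows "C a b c e = s a * s b * s c * s e * C (\<sigma> a) (\<sigma> b) (\<sigma> c) (\<sigma> e)"
proof -
  let ?L = "lorentz_of d R"
  have invariance: "(\<Sum>a'<d. \<Sum>b'<d. \<Sum>c'<d. \<Sum>e'<d.
      ?L a' a * ?L b' b * ?L c' c * ?L e' e * C a' b' c' e') = C a b c e"
    using inv R orth det abce unfolding so_invariant_def by blast
  have "(\<Sum>a'<d. \<Sum>b'<d. \<Sum>c'<d. \<Sum>e'<d.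
          ?L a' a * ?L b' b * ?L c' c * ?L e' e * C a' b' c' e') =
        (\<Sum>a'<d. ?L a' a * (\<Sum>b'<d. ?L b' b * (\<Sum>c'<d. ?L c' c *
          (\<Sum>e'<d. ?L e' e * C a' b' c' e'))))"
    by (simp add: sum_distrib_left mult.assoc)
  also have "\<dots> = (\<Sum>a'<d. ?L a' a * (\<Sum>b'<d. ?L b' b * (\<Sum>c'<d. ?L c' c *
                    (s e * C a' b' c' (\<sigma> e)))))"
    by (intro sum.cong refl arg_cong2[where f = "(*)"] sum_lessThan_single) (auto simp: L abce \<sigma>)
  also have "\<dots> = (\<Sum>a'<d. ?L a' a * (\<Sum>b'<d. ?L b' b * (s c * (s e * C a' b' (\<sigma> c) (\<sigma> e)))))"
    by (intro sum.cong refl arg_cong2[where f = "(*)"] sum_lessThan_single) (auto simp: L abce \<sigma>)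
  also have "\<dots> = (\<Sum>a'<d. ?L a' a * (s b * (s c * (s e * C a' (\<sigma> b) (\<sigma> c) (\<sigma> e)))))"
    by (intro sum.cong refl arg_cong2[where f = "(*)"] sum_lessThan_single) (auto simp: L abce \<sigma>)
  also have "\<dots> = s a * (s b * (s c * (s e * C (\<sigma> a) (\<sigma> b) (\<sigma> c) (\<sigma> e))))"
    by (intro sum_lessThan_single) (auto simp: L abce \<sigma>)
  finally show ?thesis
    using invariance by (simp add: mult.assoc)
qed

definition axis_sign :: "nat set \<Rightarrow> nat \<Rightarrow> real" where
  "axis_sign S x = (if x \<in> S then -1 else 1)"

text \<open>Exchange of the spatial axes \<open>p\<close> and \<open>q\<close>, with axis \<open>q\<close> reversed to keep the determinant \<open>1\<close>.\<close>

lemma so_invariant_transpose_axes: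
  assumes inv: "so_invariant d C"
    and pq: "2 \<le> p" "p < d" "2 \<le> q" "q < d" "p \<noteq> q"
    and abce: "a < d" "b < d" "c < d" "e < d"
  shows "C a b c e = axis_sign {q} a * axis_sign {q} b * axis_sign {q} c * axis_sign {q} e *
           C (Transposition.transpose p q a) (Transposition.transpose p q b)
             (Transposition.transpose p q c) (Transposition.transpose p q e)"
proof -
  define n where "n = d - 2"
  define R :: "real mat" where "R = multrow (p - 2) (-1) (swaprows (p - 2) (q - 2) (1\<^sub>m n))"
  have R: "R \<in> carrier_mat n n"
    unfolding R_def by auto
  have entries: "R $$ (r, c) = (if r = Transposition.transpose (p - 2) (q - 2) c
                                 then axis_sign {q - 2} c else 0)"
    if "r < n" "c < n" for r c
    using that pq unfolding R_def transpose_def axis_sign_def by (auto simp: n_def)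
  have det: "det R = 1"
    unfolding R_def using pq by (simp add: n_def det_multrow[of _ n] det_swaprows[of _ n])
  have orth: "transpose_mat R * R = 1\<^sub>m n"
    by (rule signed_permutation_mat_orthogonal[OF R entries])
      (use pq in \<open>auto simp: n_def transpose_def axis_sign_def split: if_splits\<close>)
  have L: "lorentz_of d R a' a = (if a' = Transposition.transpose p q a then axis_sign {q} a else 0)"
    if a: "a < d" "a' < d" for a a'
  proof (cases "a < 2 \<or> a' < 2")
    case True
    then show ?thesis
      using pq by (auto simp: lorentz_of_def transpose_def axis_sign_def)
  next
    case False
    have "Transposition.transpose (p - 2) (q - 2) (a - 2) = Transposition.transpose p q a - 2"
      "axis_sign {q - 2} (a - 2) = axis_sign {q} a"
      using False pq by (auto simp: transpose_def axis_sign_def)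
    moreover have "a' - 2 = Transposition.transpose p q a - 2 \<longleftrightarrow> a' = Transposition.transpose p q a"
      using False pq by (auto simp: transpose_def)
    moreover have "a' - 2 < n" "a - 2 < n"
      using False a by (auto simp: n_def)
    ultimately show ?thesis
      using False by (simp add: lorentz_of_def entries)
  qed
  show ?thesis
    by (rule so_invariant_signed_permutation[OF inv R[unfolded n_def] orth[unfolded n_def] det L])
      (use pq abce in \<open>auto simp: transpose_def\<close>)
qed

lemma so_invariant_reflect_axes:
  assumes inv: "so_invariant d C"
    and pq: "2 \<le> p" "p < d" "2 \<le> q" "q < d" "p \<noteq> q"
    and abce: "a < d" "b < d" "c < d" "e < d"
  shows "C a b c e = axis_sign {p, q} a * axis_sign {p, q} b * axis_sign {p, q} c *
           axis_sign {p, q} e * C a b c e"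
proof -
  define n where "n = d - 2"
  define R :: "real mat" where "R = multrow (p - 2) (-1) (multrow (q - 2) (-1) (1\<^sub>m n))"
  have R: "R \<in> carrier_mat n n"
    unfolding R_def by auto
  have entries: "R $$ (r, c) = (if r = id c then axis_sign {p - 2, q - 2} c else 0)"
    if "r < n" "c < n" for r c
    using that pq unfolding R_def axis_sign_def by (auto simp: n_def)
  have det: "det R = 1"
    unfolding R_def using pq by (simp add: n_def det_multrow[of _ n])
  have orth: "transpose_mat R * R = 1\<^sub>m n"
    by (rule signed_permutation_mat_orthogonal[OF R entries])
      (use pq in \<open>auto simp: n_def axis_sign_def\<close>)
  have L: "lorentz_of d R a' a = (if a' = id a then axis_sign {p, q} a else 0)"
    if a: "a < d" "a' < d" for a a'
  proof (cases "a < 2 \<or> a' < 2")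
    case True
    then show ?thesis
      using pq by (auto simp: lorentz_of_def axis_sign_def)
  next
    case False
    have "axis_sign {p - 2, q - 2} (a - 2) = axis_sign {p, q} a"
      using False pq by (auto simp: axis_sign_def)
    moreover have "a' - 2 = a - 2 \<longleftrightarrow> a' = a" "a' - 2 < n" "a - 2 < n"
      using False a by (auto simp: n_def)
    ultimately show ?thesis
      using False by (simp add: lorentz_of_def entries)
  qed
  show ?thesis
    using so_invariant_signed_permutation[OF inv R[unfolded n_def] orth[unfolded n_def] det L] pq abce
    by auto
qed

lemma frame_trace:
  fixes X :: "nat \<Rightarrow> nat \<Rightarrow> real"
  assumes "2 \<le> d"
  shows "(\<Sum>a<d. \<Sum>c<d. frame_eta d a c * X a c) = X 0 1 + X 1 0 + (\<Sum>k\<in>{2..<d}. X k k)"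
proof -
  have row: "(\<Sum>c<d. frame_eta d a c * X a c) = X a (swap01 a)" if "a < d" for a
  proof -
    have "(\<Sum>c<d. frame_eta d a c * X a c) = (\<Sum>c<d. if c = swap01 a then X a c else 0)"
      by (rule sum.cong) (use that in \<open>auto simp: frame_eta_def swap01_def\<close>)
    also have "\<dots> = X a (swap01 a)"
      using that assms by (auto simp: swap01_def)
    finally show ?thesis .
  qed
  have "{..<d} = {0, 1} \<union> {2..<d}"
    using assms by auto
  then have "(\<Sum>a<d. X a (swap01 a)) = X 0 1 + X 1 0 + (\<Sum>k\<in>{2..<d}. X k k)"
    by (simp add: sum.union_disjoint swap01_def)
  then show ?thesis
    by (simp add: row)
qed

lemma bivector_pairs_0 [simp]: "bivector_pairs 0 = []"
  by (simp add: bivector_pairs_def)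

lemma bivector_pairs_Suc [simp]:
  "bivector_pairs (Suc m) = bivector_pairs m @ map (\<lambda>a. (a, m)) [0..<m]"
  by (simp add: bivector_pairs_def)

lemma set_bivector_pairs: "set (bivector_pairs d) = {(a, b). a < b \<and> b < d}"
  by (induct d) (auto simp: less_Suc_eq)

lemma distinct_bivector_pairs: "distinct (bivector_pairs d)"
  by (induct d) (auto simp: distinct_map inj_on_def set_bivector_pairs)

lemma prod_list_bivector_pairs:
  fixes x y z :: "'a::comm_monoid_mult"
  assumes g: "\<And>a b. g (a, b) = (if a = 0 \<and> b = 1 then z else if a < 2 then x else y)"
    and "2 \<le> m"
  shows "prod_list (map g (bivector_pairs m)) = z * x ^ (2 * (m - 2)) * y ^ ((m - 2) * (m - 3) div 2)"
  using \<open>2 \<le> m\<close>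
proof (induction m rule: nat_induct_at_least)
  case base
  then show ?case
    by (simp add: bivector_pairs_def numeral_2_eq_2 g)
next
  case (Suc m)
  have new: "map (\<lambda>a. g (a, m)) [0..<m] = [x, x] @ replicate (m - 2) y"
  proof -
    have "[0..<m] = [0, 1] @ [2..<m]"
      using Suc.hyps upt_conv_Cons[of 0 m] upt_conv_Cons[of 1 m] by (simp add: numeral_2_eq_2)
    moreover have "map (\<lambda>a. g (a, m)) [2..<m] = map (\<lambda>_. y) [2..<m]"
      using Suc.hyps by (simp add: g)
    ultimately show ?thesis
      using Suc.hyps by (simp add: g map_replicate_const)
  qed
  have y_exp: "(Suc m - 2) * (Suc m - 3) div 2 = (m - 2) * (m - 3) div 2 + (m - 2)"
  proof -
    obtain k where "m = k + 2"
      using Suc.hyps le_Suc_ex by (metis add.commute)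
    then show ?thesis
      by (cases k) (simp_all add: algebra_simps)
  qed
  have x_exp: "2 * (Suc m - 2) = 2 * (m - 2) + 2"
    using Suc.hyps by simp
  show ?case
    unfolding bivector_pairs_Suc map_append prod_list.append map_map o_def new Suc.IH x_exp y_exp
      power_add
    by (simp add: mult_ac power2_eq_square)
qed

lemma mat_of_rows_list_carrier: "length rs = n \<Longrightarrow> mat_of_rows_list m rs \<in> carrier_mat n m"
  by (simp add: mat_of_rows_list_def)

lemma mat_of_rows_list_mult:
  assumes "length Y = k"
  shows "mat_of_rows_list k X * mat_of_rows_list m Y =
    mat (length X) m (\<lambda>(i, j). \<Sum>l<k. X ! i ! l * Y ! l ! j)"
  using assms by (intro eq_matI) (auto simp: mat_of_rows_list_def scalar_prod_def atLeast0LessThan)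

lemma sum_lessThan_6:
  fixes f :: "nat \<Rightarrow> 'a::comm_monoid_add"
  shows "(\<Sum>k<6. f k) = f 0 + f 1 + f 2 + f 3 + f 4 + f 5"
  by (simp add: numeral_eq_Suc lessThan_Suc add_ac)

lemma char_poly_mat_diag:
  "char_poly (mat_diag (length ev) (\<lambda>i. ev ! i)) = prod_list (map (\<lambda>a. [:-a, 1:]) ev)"
proof -
  have "diag_mat (mat_diag (length ev) (\<lambda>i. ev ! i)) = ev"
    by (rule nth_equalityI) (auto simp: diag_mat_def mat_diag_def)
  moreover have "upper_triangular (mat_diag (length ev) (\<lambda>i. ev ! i))"
    by (auto simp: upper_triangular_def mat_diag_def)
  ultimately show ?thesis
    using char_poly_upper_triangular[OF mat_diag_dim] by metis
qed

text \<open>Three \<open>2\<times>2\<close> blocks \<open>[[a, -b], [b, a]]\<close> on the index pairs \<open>(0, 5)\<close>, \<open>(1, 3)\<close>,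
  \<open>(4, 2)\<close>, each with eigenvalues \<open>a \<plusminus> i b\<close>.\<close>

definition rotation_blocks_mat :: "'a::comm_ring_1 \<Rightarrow> 'a \<Rightarrow> 'a \<Rightarrow> 'a \<Rightarrow> 'a mat" where
  "rotation_blocks_mat w g u h = mat_of_rows_list 6
     [[w, 0, 0, 0, 0, -g], [0, u, 0, -h, 0, 0], [0, 0, u, 0, h, 0],
      [0, h, 0, u, 0, 0], [0, 0, -h, 0, u, 0], [g, 0, 0, 0, 0, w]]"

lemma rotation_blocks_mat_similar_diag:
  fixes w g u h :: complex
  defines "ev \<equiv> [w + \<i> * g, u + \<i> * h, u + \<i> * h, w - \<i> * g, u - \<i> * h, u - \<i> * h]"
  shows "similar_mat (rotation_blocks_mat w g u h) (mat_diag 6 (\<lambda>i. ev ! i))"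
proof -
  define A where "A = rotation_blocks_mat w g u h"
  define B where "B = mat_diag 6 (\<lambda>i. ev ! i)"
  define P :: "complex mat" where "P = mat_of_rows_list 6
      [[1, 0, 0, 1, 0, 0], [0, 1, 0, 0, 1, 0], [0, 0, 1, 0, 0, 1],
       [0, -\<i>, 0, 0, \<i>, 0], [0, 0, \<i>, 0, 0, -\<i>], [-\<i>, 0, 0, \<i>, 0, 0]]"
  define Q :: "complex mat" where "Q = mat_of_rows_list 6
      [[1/2, 0, 0, 0, 0, \<i>/2], [0, 1/2, 0, \<i>/2, 0, 0], [0, 0, 1/2, 0, -\<i>/2, 0],
       [1/2, 0, 0, 0, 0, -\<i>/2], [0, 1/2, 0, -\<i>/2, 0, 0], [0, 0, 1/2, 0, \<i>/2, 0]]"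
  have carrier: "A \<in> carrier_mat 6 6" "B \<in> carrier_mat 6 6" "P \<in> carrier_mat 6 6" "Q \<in> carrier_mat 6 6"
    unfolding A_def rotation_blocks_mat_def B_def P_def Q_def
    by (simp_all add: mat_of_rows_list_carrier)
  have six: "i < 6 \<longleftrightarrow> i = 0 \<or> i = 1 \<or> i = 2 \<or> i = 3 \<or> i = 4 \<or> i = (5::nat)" for i
    by auto
  have PQ: "P * Q = 1\<^sub>m 6" and QP: "Q * P = 1\<^sub>m 6"
    unfolding P_def Q_def
    by (simp_all only: mat_of_rows_list_mult list.size) (auto intro!: eq_matI simp: six sum_lessThan_6)
  have "A * P = P * B"
    unfolding B_def mat_diag_mult_right[OF carrier(3)] unfolding A_def rotation_blocks_mat_def P_def
    by (simp only: mat_of_rows_list_mult list.size)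
      (auto intro!: eq_matI simp: six sum_lessThan_6 algebra_simps ev_def mat_of_rows_list_def)
  then have "A = P * B * Q"
    using carrier PQ by (metis assoc_mult_mat right_mult_one_mat mult_carrier_mat)
  then have "similar_mat_wit A B P Q"
    unfolding similar_mat_wit_def Let_def carrier_matD(1)[OF carrier(1)]
    using carrier PQ QP by blast
  then show ?thesis
    unfolding similar_mat_def A_def B_def by blast
qed

lemma char_poly_rotation_blocks_mat:
  fixes w g u h :: complex
  shows "char_poly (rotation_blocks_mat w g u h) =
    [:-(w + \<i> * g), 1:] * [:-(u + \<i> * h), 1:] ^ 2 * [:-(w - \<i> * g), 1:] * [:-(u - \<i> * h), 1:] ^ 2"
proof -
  let ?ev = "[w + \<i> * g, u + \<i> * h, u + \<i> * h, w - \<i> * g, u - \<i> * h, u - \<i> * h]"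
  have len: "length ?ev = 6"
    by simp
  have "char_poly (rotation_blocks_mat w g u h) = char_poly (mat_diag (length ?ev) (\<lambda>i. ?ev ! i))"
    unfolding len by (rule char_poly_similar[OF rotation_blocks_mat_similar_diag])
  also have "\<dots> = prod_list (map (\<lambda>a. [:-a, 1:]) ?ev)"
    by (rule char_poly_mat_diag)
  finally show ?thesis
    unfolding list.map prod_list.Cons prod_list.Nil power2_eq_square mult_1_right
    by (simp only: mult_ac)
qed

lemma dim_weyl_op_mat [simp]:
  "dim_row (weyl_op_mat d C) = length (bivector_pairs d)"
  "dim_col (weyl_op_mat d C) = length (bivector_pairs d)"
  by (simp_all add: weyl_op_mat_def Let_def)

lemma weyl_op_mat_carrier:
  "weyl_op_mat d C \<in> carrier_mat (length (bivector_pairs d)) (length (bivector_pairs d))"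
  by (rule carrier_matI) simp_all

lemma weyl_op_mat_index:
  assumes "i < length (bivector_pairs d)" "j < length (bivector_pairs d)"
  shows "weyl_op_mat d C $$ (i, j) =
    complex_of_real (C (swap01 (fst (bivector_pairs d ! i))) (swap01 (snd (bivector_pairs d ! i)))
                       (fst (bivector_pairs d ! j)) (snd (bivector_pairs d ! j)))"
  using assms by (simp add: weyl_op_mat_def Let_def split: prod.split)

lemma weyl_op_mat_rows:
  "weyl_op_mat d C = mat_of_rows_list (length (bivector_pairs d))
     (map (\<lambda>(m, n). map (\<lambda>(a, b). complex_of_real (C (swap01 m) (swap01 n) a b)) (bivector_pairs d))
       (bivector_pairs d))"
  by (rule eq_matI) (auto simp: weyl_op_mat_index mat_of_rows_list_def split: prod.split)

lemma diag_mat_weyl_op_mat: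
  "diag_mat (weyl_op_mat d C) =
     map (\<lambda>(a, b). complex_of_real (C (swap01 a) (swap01 b) a b)) (bivector_pairs d)"
  by (rule nth_equalityI) (auto simp: diag_mat_def weyl_op_mat_index split: prod.split)

locale so_invariant_weyl =
  fixes d :: nat and C :: "nat \<Rightarrow> nat \<Rightarrow> nat \<Rightarrow> nat \<Rightarrow> real"
  assumes weyl: "is_weyl d C" and invariant: "so_invariant d C" and dim: "4 \<le> d"
begin

lemma antisym_left: "a < d \<Longrightarrow> b < d \<Longrightarrow> c < d \<Longrightarrow> e < d \<Longrightarrow> C a b c e = - C b a c e"
  using weyl unfolding is_weyl_def by blast

lemma antisym_right: "a < d \<Longrightarrow> b < d \<Longrightarrow> c < d \<Longrightarrow> e < d \<Longrightarrow> C a b c e = - C a b e c"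
  using weyl unfolding is_weyl_def by blast

lemma pair_sym: "a < d \<Longrightarrow> b < d \<Longrightarrow> c < d \<Longrightarrow> e < d \<Longrightarrow> C a b c e = C c e a b"
  using weyl unfolding is_weyl_def by blast

lemma bianchi: "a < d \<Longrightarrow> b < d \<Longrightarrow> c < d \<Longrightarrow> e < d \<Longrightarrow> C a b c e + C a c e b + C a e b c = 0"
  using weyl unfolding is_weyl_def by blast

lemma traceless:
  assumes "b < d" "e < d"
  shows "C 0 b 1 e + C 1 b 0 e + (\<Sum>k\<in>{2..<d}. C k b k e) = 0"
proof -
  have "(\<Sum>a<d. \<Sum>c<d. frame_eta d a c * C a b c e) = 0"
    using weyl assms unfolding is_weyl_def by blast
  then show ?thesis
    using frame_trace[of d "\<lambda>a c. C a b c e"] dim by simp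
qed

lemma swap_both_pairs: "a < d \<Longrightarrow> b < d \<Longrightarrow> c < d \<Longrightarrow> C a b a c = C b a c a"
  using antisym_left[of a b a c] antisym_right[of b a a c] by simp

lemmas transpose_axes = so_invariant_transpose_axes[OF invariant]

lemma odd_reflection_zero:
  assumes "2 \<le> p" "p < d" "2 \<le> q" "q < d" "p \<noteq> q" "a < d" "b < d" "c < d" "e < d"
    and "axis_sign {p, q} a * axis_sign {p, q} b * axis_sign {p, q} c * axis_sign {p, q} e = -1"
  shows "C a b c e = 0"
  using so_invariant_reflect_axes[OF invariant assms(1-9)] assms(10) by simp

definition mixed_coeff :: real where "mixed_coeff = C 0 2 1 2"

definition spatial_coeff :: real where "spatial_coeff = C 2 3 2 3"

lemma null_spatial_component:
  assumes "2 \<le> i" "i < d" "x < 2" "y < 2"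
  shows "C x i y i = C x 2 y 2"
proof (cases "i = 2")
  case False
  then show ?thesis
    using transpose_axes[of i 2 x i y i] assms dim by (simp add: axis_sign_def)
qed simp

lemma spatial_component:
  assumes "2 \<le> i" "i < d" "2 \<le> j" "j < d" "i \<noteq> j"
  shows "C i j i j = spatial_coeff"
proof -
  have row_2: "C 2 j 2 j = C 2 3 2 3" if "2 < j" "j < d" for j
  proof (cases "j = 3")
    case False
    then show ?thesis
      using transpose_axes[of j 3 2 j 2 j] that dim by (simp add: axis_sign_def)
  qed simp
  show ?thesis
  proof (cases "i = 2")
    case True
    then show ?thesis
      using row_2[of j] assms by (simp add: spatial_coeff_def)
  next
    case False
    have "C i j i j = C 2 (Transposition.transpose i 2 j) 2 (Transposition.transpose i 2 j)"
      using transpose_axes[of i 2 i j i j] assms False dim by (simp add: axis_sign_def)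
    also have "\<dots> = C 2 3 2 3"
      using row_2[of "Transposition.transpose i 2 j"] assms False by (auto simp: transpose_def)
    finally show ?thesis
      unfolding spatial_coeff_def .
  qed
qed

lemma null_null_spatial_zero:
  assumes x: "x < 2" and i: "2 \<le> i" "i < d"
  shows "C x i x i = 0"
proof -
  have "C 0 x 1 x + C 1 x 0 x = 0"
    using x dim antisym_left[of 0 0 1 0] antisym_right[of 1 0 0 0] antisym_right[of 0 1 1 1]
      antisym_left[of 1 1 0 1]
    by (auto simp: less_2_cases_iff)
  moreover have "(\<Sum>k\<in>{2..<d}. C k x k x) = (\<Sum>k\<in>{2..<d}. C x 2 x 2)"
  proof (rule sum.cong)
    fix k assume "k \<in> {2..<d}"
    then show "C k x k x = C x 2 x 2"
      using swap_both_pairs[of k x x] null_spatial_component[of k x x] x dim by simp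
  qed simp
  ultimately have "real (d - 2) * C x 2 x 2 = 0"
    using traceless[of x x] x dim by simp
  then show ?thesis
    using null_spatial_component[OF i x x] dim by simp
qed

lemma mixed_component: "2 \<le> i \<Longrightarrow> i < d \<Longrightarrow> C 0 i 1 i = mixed_coeff"
  unfolding mixed_coeff_def by (rule null_spatial_component) auto

lemma sum_spatial_component:
  assumes "2 \<le> i" "i < d"
  shows "(\<Sum>k\<in>{2..<d}. C k i k i) = (real d - 3) * spatial_coeff"
proof -
  have "(\<Sum>k\<in>{2..<d}. C k i k i) = (\<Sum>k\<in>{2..<d} - {i}. spatial_coeff)"
    using assms antisym_left[of i i i i] by (intro sum.mono_neutral_cong_right) (auto simp: spatial_component)
  also have "\<dots> = (real d - 3) * spatial_coeff"
    using assms by (simp add: of_nat_diff)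
  finally show ?thesis .
qed

lemma boost_component: "C 1 0 0 1 = - real (d - 2) * mixed_coeff"
proof -
  have "(\<Sum>k\<in>{2..<d}. C k 0 k 1) = (\<Sum>k\<in>{2..<d}. mixed_coeff)"
  proof (rule sum.cong)
    fix k assume "k \<in> {2..<d}"
    then show "C k 0 k 1 = mixed_coeff"
      using swap_both_pairs[of k 0 1] mixed_component[of k] dim by simp
  qed simp
  then have "C 1 0 0 1 + real (d - 2) * mixed_coeff = 0"
    using traceless[of 0 1] antisym_left[of 0 0 1 1] dim by simp
  then show ?thesis
    by linarith
qed

lemma mixed_spatial_relation: "2 * mixed_coeff + (real d - 3) * spatial_coeff = 0"
  using traceless[of 2 2] pair_sym[of 1 2 0 2] sum_spatial_component[of 2] dim
  by (simp add: mixed_coeff_def)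

lemma Rbar_spatial_coeff: "Rbar d C = real (d - 2) * (real (d - 2) - 1) * spatial_coeff"
proof -
  have "real (d - 2) - 1 = real d - 3"
    using dim by (simp add: of_nat_diff)
  then show ?thesis
    unfolding Rbar_def using sum_spatial_component by simp
qed

lemma Rbar_mixed_coeff: "Rbar d C = - 2 * real (d - 2) * mixed_coeff"
proof -
  have "real (d - 2) - 1 = real d - 3"
    using dim by (simp add: of_nat_diff)
  then have spatial_term: "(real (d - 2) - 1) * spatial_coeff = - 2 * mixed_coeff"
    using mixed_spatial_relation by simp
  have "Rbar d C = real (d - 2) * (- 2 * mixed_coeff)"
    by (simp only: Rbar_spatial_coeff mult.assoc spatial_term)
  then show ?thesis
    by simp
qed

lemma coeffs_Rbar:
  "C 1 0 0 1 = Rbar d C / 2"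
  "mixed_coeff = - Rbar d C / (2 * real (d - 2))"
  "spatial_coeff = Rbar d C / (real (d - 2) * (real (d - 2) - 1))"
proof -
  define n where "n = real (d - 2)"
  have "n \<noteq> 0" "n - 1 \<noteq> 0"
    using dim by (auto simp: n_def)
  then show "C 1 0 0 1 = Rbar d C / 2" "mixed_coeff = - Rbar d C / (2 * real (d - 2))"
    "spatial_coeff = Rbar d C / (real (d - 2) * (real (d - 2) - 1))"
    using boost_component Rbar_mixed_coeff Rbar_spatial_coeff unfolding n_def[symmetric]
    by (simp_all add: field_simps)
qed

text \<open>The two components below are forced to vanish by a transposition of the spatial axes
  combined with the Bianchi identity; the reflections alone do not suffice when \<open>d = 5\<close>.\<close>

lemma three_spatial_zero:
  assumes x: "x < 2" and ijk: "2 \<le> i" "i < d" "2 \<le> j" "j < d" "2 \<le> k" "k < d"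
    "i \<noteq> j" "i \<noteq> k" "j \<noteq> k"
  shows "C x i j k = 0"
proof -
  have "x < d"
    using x dim by simp
  then have "C x i j k = - C x j i k" "C x i j k = - C x k j i"
    using transpose_axes[of i j x i j k] transpose_axes[of i k x i j k] x ijk
    by (simp_all add: axis_sign_def)
  moreover have "C x j k i = - C x j i k" "C x k i j = - C x k j i"
    "C x i j k + C x j k i + C x k i j = 0"
    using antisym_right[of x j k i] antisym_right[of x k i j] bianchi[of x i j k] \<open>x < d\<close> ijk
    by simp_all
  ultimately show ?thesis
    by simp
qed

lemma four_spatial_zero:
  assumes ijkl: "2 \<le> i" "i < d" "2 \<le> j" "j < d" "2 \<le> k" "k < d" "2 \<le> l" "l < d"
    "i \<noteq> j" "i \<noteq> k" "j \<noteq> k" "i \<noteq> l" "j \<noteq> l" "k \<noteq> l"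
  shows "C i j k l = 0"
proof -
  have "C i j k l = - C i k j l" "C i j k l = - C i l k j"
    using transpose_axes[of j k i j k l] transpose_axes[of j l i j k l] ijkl
    by (simp_all add: axis_sign_def)
  moreover have "C i k l j = - C i k j l" "C i l j k = - C i l k j"
    "C i j k l + C i k l j + C i l j k = 0"
    using antisym_right[of i k l j] antisym_right[of i l j k] bianchi[of i j k l] ijkl
    by simp_all
  ultimately show ?thesis
    by simp
qed

lemma obtain_spatial_axis:
  assumes "5 \<le> d"
  obtains m where "2 \<le> m" "m < d" "m \<noteq> i" "m \<noteq> j"
proof -
  have "{2, 3, 4} - {i, j} \<noteq> {}"
    by auto
  then show ?thesis
    using that assms by fastforce
qed

lemma boost_row_zero:
  assumes "5 \<le> d" "a < b" "b < d" "(a, b) \<noteq> (0, 1)"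
  shows "C 1 0 a b = 0"
proof -
  obtain m where "2 \<le> m" "m < d" "m \<noteq> a" "m \<noteq> b"
    using obtain_spatial_axis[OF \<open>5 \<le> d\<close>] .
  moreover have "2 \<le> b"
    using assms by auto
  ultimately show ?thesis
    using assms by (intro odd_reflection_zero[of b m]) (auto simp: axis_sign_def)
qed

lemma mixed_row_zero:
  assumes "5 \<le> d" "x < 2" "2 \<le> i" "i < d" "a < b" "b < d" "(a, b) \<noteq> (x, i)"
  shows "C (swap01 x) i a b = 0"
proof -
  have x': "swap01 x < 2" "swap01 x \<noteq> x"
    using \<open>x < 2\<close> by (auto simp: swap01_def)
  consider "b < 2" | "a < 2" "b = i" | "a < 2" "2 \<le> b" "b \<noteq> i" | "2 \<le> a" "i \<in> {a, b}"
    | "2 \<le> a" "i \<notin> {a, b}"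
    by linarith
  then show ?thesis
  proof cases
    case 1
    obtain m where "2 \<le> m" "m < d" "m \<noteq> i" "m \<noteq> b"
      using obtain_spatial_axis[OF \<open>5 \<le> d\<close>] .
    with 1 assms x' show ?thesis
      by (intro odd_reflection_zero[of i m]) (auto simp: axis_sign_def)
  next
    case 2
    then have "a = swap01 x"
      using assms x' by (auto simp: swap01_def)
    with 2 assms x' show ?thesis
      using null_null_spatial_zero by simp
  next
    case 3
    obtain m where "2 \<le> m" "m < d" "m \<noteq> i" "m \<noteq> b"
      using obtain_spatial_axis[OF \<open>5 \<le> d\<close>] .
    with 3 assms x' show ?thesis
      by (intro odd_reflection_zero[of i m]) (auto simp: axis_sign_def)
  next
    case 4
    with assms x' show ?thesis
      by (intro odd_reflection_zero[of a b]) (auto simp: axis_sign_def)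
  next
    case 5
    with assms x' show ?thesis
      by (intro three_spatial_zero) auto
  qed
qed

lemma spatial_row_zero:
  assumes "5 \<le> d" "2 \<le> i" "i < j" "j < d" "a < b" "b < d" "(a, b) \<noteq> (i, j)"
  shows "C i j a b = 0"
proof -
  consider "b < 2" | "a < 2" "b \<in> {i, j}" | "a < 2" "2 \<le> b" "b \<notin> {i, j}"
    | "2 \<le> a" "{a, b} \<inter> {i, j} \<noteq> {}" | "2 \<le> a" "{a, b} \<inter> {i, j} = {}"
    by linarith
  then show ?thesis
  proof cases
    case 1
    obtain m where "2 \<le> m" "m < d" "m \<noteq> i" "m \<noteq> j"
      using obtain_spatial_axis[OF \<open>5 \<le> d\<close>] .
    with 1 assms show ?thesis
      by (intro odd_reflection_zero[of i m]) (auto simp: axis_sign_def)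
  next
    case 2
    with assms show ?thesis
      by (intro odd_reflection_zero[of i j]) (auto simp: axis_sign_def)
  next
    case 3
    with assms have "C a b i j = 0"
      by (intro three_spatial_zero) auto
    with assms show ?thesis
      using pair_sym[of i j a b] by simp
  next
    case 4
    with assms show ?thesis
      by (intro odd_reflection_zero[of i j]) (auto simp: axis_sign_def)
  next
    case 5
    with assms show ?thesis
      by (intro four_spatial_zero) auto
  qed
qed

lemma weyl_op_offdiag_zero:
  assumes "5 \<le> d" "m < n" "n < d" "a < b" "b < d" "(m, n) \<noteq> (a, b)"
  shows "C (swap01 m) (swap01 n) a b = 0"
proof -
  consider "m = 0" "n = 1" | "m < 2" "2 \<le> n" | "2 \<le> m"
    using assms by linarith
  then show ?thesis
  proof cases
    case 1
    with assms show ?thesis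
      using boost_row_zero[of a b] by (auto simp: swap01_def)
  next
    case 2
    then have "swap01 n = n"
      by (simp add: swap01_def)
    with 2 assms show ?thesis
      using mixed_row_zero[of m n a b] by auto
  next
    case 3
    then have "swap01 m = m" "swap01 n = n"
      using assms by (simp_all add: swap01_def)
    with 3 assms show ?thesis
      using spatial_row_zero[of m n a b] by auto
  qed
qed

lemma weyl_op_diag:
  assumes "a < b" "b < d"
  shows "C (swap01 a) (swap01 b) a b =
    (if a = 0 \<and> b = 1 then C 1 0 0 1 else if a < 2 then mixed_coeff else spatial_coeff)"
proof -
  consider "a = 0" "b = 1" | "a = 0" "2 \<le> b" | "a = 1" | "2 \<le> a"
    using assms by linarith
  then show ?thesis
  proof cases
    case 2
    with assms show ?thesis
      using mixed_component[of b] pair_sym[of 1 b 0 b] by (simp add: swap01_def)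
  next
    case 3
    with assms show ?thesis
      using mixed_component[of b] by (simp add: swap01_def)
  next
    case 4
    with assms show ?thesis
      using spatial_component[of a b] by (simp add: swap01_def)
  qed (simp add: swap01_def)
qed

lemma weyl_op_mat_upper_triangular:
  assumes "5 \<le> d"
  shows "upper_triangular (weyl_op_mat d C)"
  unfolding upper_triangular_def
proof (intro allI impI)
  let ?P = "bivector_pairs d"
  fix i j assume "i < dim_row (weyl_op_mat d C)" "j < i"
  then have ij: "i < length ?P" "j < length ?P" "?P ! i \<noteq> ?P ! j"
    using distinct_bivector_pairs[of d] by (auto simp: nth_eq_iff_index_eq)
  have "fst (?P ! k) < snd (?P ! k) \<and> snd (?P ! k) < d" if "k < length ?P" for k
    using nth_mem[OF that] unfolding set_bivector_pairs by auto
  with ij show "weyl_op_mat d C $$ (i, j) = 0"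
    using weyl_op_offdiag_zero[OF assms, of "fst (?P ! i)" "snd (?P ! i)"]
    by (simp add: weyl_op_mat_index prod_eq_iff)
qed

lemma char_poly_weyl_op_mat_high_dim:
  assumes "5 \<le> d"
  shows "char_poly (weyl_op_mat d C) =
    [:- complex_of_real (C 1 0 0 1), 1:] *
    [:- complex_of_real mixed_coeff, 1:] ^ (2 * (d - 2)) *
    [:- complex_of_real spatial_coeff, 1:] ^ ((d - 2) * (d - 3) div 2)"
proof -
  let ?g = "\<lambda>(a, b). if a = 0 \<and> b = 1 then [:- complex_of_real (C 1 0 0 1), 1:]
             else if a < 2 then [:- complex_of_real mixed_coeff, 1:]
             else [:- complex_of_real spatial_coeff, 1:]"
  have "char_poly (weyl_op_mat d C) = prod_list (map (\<lambda>a. [:-a, 1:]) (diag_mat (weyl_op_mat d C)))"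
    by (rule char_poly_upper_triangular[OF weyl_op_mat_carrier weyl_op_mat_upper_triangular[OF assms]])
  also have "map (\<lambda>a. [:-a, 1:]) (diag_mat (weyl_op_mat d C)) = map ?g (bivector_pairs d)"
    unfolding diag_mat_weyl_op_mat map_map
    by (rule map_cong) (auto simp: set_bivector_pairs weyl_op_diag)
  also have "prod_list (map ?g (bivector_pairs d)) = [:- complex_of_real (C 1 0 0 1), 1:] *
      [:- complex_of_real mixed_coeff, 1:] ^ (2 * (d - 2)) *
      [:- complex_of_real spatial_coeff, 1:] ^ ((d - 2) * (d - 3) div 2)"
    using assms by (intro prod_list_bivector_pairs) auto
  finally show ?thesis .
qed

lemma mixed_cross_components_dim4:
  assumes "d = 4"
  shows "C 1 2 1 3 = 0" "C 1 3 1 2 = 0" "C 0 2 0 3 = 0" "C 0 3 0 2 = 0"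
    and "C 0 2 1 3 = C 0 1 2 3 / 2" "C 0 3 1 2 = - (C 0 1 2 3 / 2)"
    "C 1 2 0 3 = - (C 0 1 2 3 / 2)" "C 1 3 0 2 = C 0 1 2 3 / 2"
proof -
  show "C 1 2 1 3 = 0" "C 1 3 1 2 = 0" "C 0 2 0 3 = 0" "C 0 3 0 2 = 0"
    using transpose_axes[of 2 3 1 2 1 3] transpose_axes[of 2 3 0 2 0 3]
      pair_sym[of 1 3 1 2] pair_sym[of 0 3 0 2] assms
    by (simp_all add: axis_sign_def)
  have "C 0 2 1 3 = - C 0 3 1 2"
    using transpose_axes[of 2 3 0 2 1 3] assms by (simp add: axis_sign_def)
  moreover have "C 0 1 2 3 + C 0 2 3 1 + C 0 3 1 2 = 0" "C 0 2 3 1 = - C 0 2 1 3"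
    using bianchi[of 0 1 2 3] antisym_right[of 0 2 3 1] assms by simp_all
  ultimately show "C 0 2 1 3 = C 0 1 2 3 / 2" "C 0 3 1 2 = - (C 0 1 2 3 / 2)"
    "C 1 2 0 3 = - (C 0 1 2 3 / 2)" "C 1 3 0 2 = C 0 1 2 3 / 2"
    using pair_sym[of 1 2 0 3] pair_sym[of 1 3 0 2] assms by simp_all
qed

lemma weyl_op_mat_dim4:
  assumes d: "d = 4"
  shows "weyl_op_mat d C = rotation_blocks_mat (complex_of_real spatial_coeff)
           (complex_of_real (C 0 1 2 3)) (complex_of_real mixed_coeff) (complex_of_real (C 0 1 2 3 / 2))"
proof -
  have boost: "C 1 0 0 1 = spatial_coeff" "C 1 0 2 3 = - C 0 1 2 3" "C 2 3 0 1 = C 0 1 2 3"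
    "C 2 3 2 3 = spatial_coeff"
    using boost_component mixed_spatial_relation antisym_left[of 0 1 2 3] pair_sym[of 2 3 0 1] d
    by (simp_all add: spatial_coeff_def)
  have mixed: "C 0 2 1 2 = mixed_coeff" "C 0 3 1 3 = mixed_coeff" "C 1 2 0 2 = mixed_coeff"
    "C 1 3 0 3 = mixed_coeff"
    using mixed_component[of 2] mixed_component[of 3] pair_sym[of 1 2 0 2] pair_sym[of 1 3 0 3] d
    by simp_all
  have null_null: "C 1 2 1 2 = 0" "C 1 3 1 3 = 0" "C 0 2 0 2 = 0" "C 0 3 0 3 = 0"
    using null_null_spatial_zero d by simp_all
  have odd: "C a b c e = 0"
    if "a < 4" "b < 4" "c < 4" "e < 4"
      "axis_sign {2, 3} a * axis_sign {2, 3} b * axis_sign {2, 3} c * axis_sign {2, 3} e = -1"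
    for a b c e
    using odd_reflection_zero[of 2 3] that d by simp
  have pairs: "bivector_pairs d = [(0, 1), (0, 2), (1, 2), (0, 3), (1, 3), (2, 3)]"
    using d by (simp add: bivector_pairs_def eval_nat_numeral)
  have len: "length (bivector_pairs d) = 6"
    by (simp add: pairs)
  show ?thesis
    unfolding weyl_op_mat_rows len unfolding pairs rotation_blocks_mat_def
    \<comment> \<open>without \<open>One_nat_def\<close> the index \<open>1\<close> stays a numeral, as in the facts above\<close>
    by (simp add: swap01_def boost mixed null_null mixed_cross_components_dim4[OF d] odd axis_sign_def
        del: One_nat_def)
qed

lemma char_poly_weyl_op_mat_dim4:
  assumes "d = 4"
  shows "let R = complex_of_real (Rbar d C); A = complex_of_real (A34 C) in
    char_poly (weyl_op_mat d C) =
      [:-(-(1/4) * (R + 2 * \<i> * A)), 1:] ^ 2 * [:-(-(1/4) * (R - 2 * \<i> * A)), 1:] ^ 2 *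
      [:-((1/2) * (R + 2 * \<i> * A)), 1:] * [:-((1/2) * (R - 2 * \<i> * A)), 1:]"
proof -
  define R A where "R = complex_of_real (Rbar d C)" and "A = complex_of_real (A34 C)"
  define w u where "w = complex_of_real spatial_coeff" and "u = complex_of_real mixed_coeff"
  have wu: "w = R / 2" "u = - R / 4"
    unfolding w_def u_def coeffs_Rbar R_def using assms by simp_all
  have roots: "w + \<i> * A = (1/2) * (R + 2 * \<i> * A)" "w - \<i> * A = (1/2) * (R - 2 * \<i> * A)"
    "u + \<i> * complex_of_real (A34 C / 2) = -(1/4) * (R - 2 * \<i> * A)"
    "u - \<i> * complex_of_real (A34 C / 2) = -(1/4) * (R + 2 * \<i> * A)"
    unfolding wu A_def by (simp_all add: field_simps)
  have "char_poly (weyl_op_mat d C) =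
      [:-(w + \<i> * A), 1:] * [:-(u + \<i> * complex_of_real (A34 C / 2)), 1:] ^ 2 *
      [:-(w - \<i> * A), 1:] * [:-(u - \<i> * complex_of_real (A34 C / 2)), 1:] ^ 2"
    unfolding weyl_op_mat_dim4[OF assms] w_def u_def A_def A34_def
    by (rule char_poly_rotation_blocks_mat)
  then show ?thesis
    unfolding Let_def R_def[symmetric] A_def[symmetric] roots by (simp only: mult_ac)
qed

lemma char_poly_weyl_op_mat_gt4:
  assumes "4 < d"
  shows "let R = complex_of_real (Rbar d C); D = of_nat (d - 2) :: complex in
    char_poly (weyl_op_mat d C) =
      [:-(-(1 / (2 * D)) * R), 1:] ^ (2 * (d - 2)) * [:-((1/2) * R), 1:] *
      [:-((1 / (D * (D - 1))) * R), 1:] ^ ((d - 2) * (d - 3) div 2)"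
proof -
  define R D where "R = complex_of_real (Rbar d C)" and "D = (of_nat (d - 2) :: complex)"
  have roots: "complex_of_real (C 1 0 0 1) = (1/2) * R"
    "complex_of_real mixed_coeff = -(1 / (2 * D)) * R"
    "complex_of_real spatial_coeff = (1 / (D * (D - 1))) * R"
    unfolding coeffs_Rbar R_def D_def by simp_all
  have "5 \<le> d"
    using assms by simp
  from char_poly_weyl_op_mat_high_dim[OF this, unfolded roots] show ?thesis
    unfolding Let_def R_def[symmetric] D_def[symmetric] by (simp only: mult_ac)
qed

end

theorem mainTheorem2:
  fixes d :: nat and C :: "nat \<Rightarrow> nat \<Rightarrow> nat \<Rightarrow> nat \<Rightarrow> real"
  assumes "4 \<le> d" and "is_weyl d C" and "so_invariant d C"
  shows "(d = 4 \<longrightarrow>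
            (let R = complex_of_real (Rbar d C); A = complex_of_real (A34 C) in
             char_poly (weyl_op_mat d C) =
               [:-(-(1/4) * (R + 2 * \<i> * A)), 1:] ^ 2 *
               [:-(-(1/4) * (R - 2 * \<i> * A)), 1:] ^ 2 *
               [:-((1/2) * (R + 2 * \<i> * A)), 1:] *
               [:-((1/2) * (R - 2 * \<i> * A)), 1:]))
       \<and> (4 < d \<longrightarrow>
            (let R = complex_of_real (Rbar d C); D = of_nat (d - 2) :: complex in
             char_poly (weyl_op_mat d C) =
               [:-(-(1 / (2 * D)) * R), 1:] ^ (2 * (d - 2)) *
               [:-((1/2) * R), 1:] *
               [:-((1 / (D * (D - 1))) * R), 1:] ^ ((d - 2) * (d - 3) div 2)))"
proof -
  interpret so_invariant_weyl d C
    using assms by unfold_locales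
  show ?thesis
    using char_poly_weyl_op_mat_dim4 char_poly_weyl_op_mat_gt4 by blast
qed

end
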